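(* There is a universal constant $C>0$ such that the following holds. Let $m\ge2$, $n\ge0$ be integers and $p,q\in[0,1]$ with $mp\ge 64\log m$ and $p\le2/3$. Let $X\sim\mathrm{Binom}(m,p)$ and $Y\sim\mathrm{Binom}(n,q)$ be independent. Then for any $\ell$ with $1\le\ell\le\sqrt{mp\log m}$, \[ \Pr(Y\ge X+\ell)\ge\Pr(Y\ge X)\exp\Big(-C\ell\sqrt{\tfrac{\log m}{mp}}\Big)-2m^{-2}, \] \[ \Pr(Y\ge X-\ell)\le\Pr(Y\ge X)\exp\Big(C\ell\sqrt{\tfrac{\log m}{mp}}\Big)+2m^{-2}. \] *)

theory Defs
  imports "HOL-Probability.Probability"
begin

definition indep_binoms :: "nat \<Rightarrow> real \<Rightarrow> nat \<Rightarrow> real \<Rightarrow> (nat \<times> nat) pmf" where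
  "indep_binoms m p n q = pair_pmf (binomial_pmf m p) (binomial_pmf n q)"

end

theory Submission
  imports Defs
begin

text \<open>
  Conditioning on \<open>X = x\<close>, each probability is \<open>\<Sum>\<^sub>x Pr(X = x) H(x + r)\<close> with
  \<open>H r = Pr(Y \<ge> r)\<close>. By Chernoff bounds, \<open>X\<close> leaves the window
  \<open>|x - mp| < 3 \<surd>(mp log m)\<close> with probability at most \<open>2/m\<^sup>2\<close>. Inside the window the ratio
  \<open>Pr(X = k) / Pr(X = k - 1) = (m - k + 1) p / (k (1 - p))\<close> is at most \<open>exp (48 \<delta>)\<close>, where
  \<open>\<delta> = \<surd>(log m / (mp))\<close>, so shifting \<open>X\<close> by an integer \<open>L \<le> \<lceil>l\<rceil>\<close> changes the
  weights by a factor of at most \<open>exp (48 \<delta> L) \<le> exp (100 l \<delta>)\<close>.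
\<close>

lemma prob_pair_pmf_eq_sum:
  fixes A :: "nat pmf" and B :: "'b::countable pmf"
  assumes "set_pmf A \<subseteq> {..m}"
  shows "measure_pmf.prob (pair_pmf A B) S = (\<Sum>x\<le>m. pmf A x * measure_pmf.prob B {y. (x, y) \<in> S})"
proof -
  let ?M = "pair_pmf A B"
  have "S \<inter> set_pmf ?M = (S \<inter> ({..m} \<times> UNIV)) \<inter> set_pmf ?M"
    using assms by auto
  then have "measure_pmf.prob ?M S = measure_pmf.prob ?M (S \<inter> ({..m} \<times> UNIV))"
    by (metis measure_Int_set_pmf)
  also have "S \<inter> ({..m} \<times> UNIV) = (\<Union>x\<le>m. {x} \<times> {y. (x, y) \<in> S})"
    by auto
  also have "measure_pmf.prob ?M \<dots> = (\<Sum>x\<le>m. measure_pmf.prob ?M ({x} \<times> {y. (x, y) \<in> S}))"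
    by (intro measure_pmf.finite_measure_finite_Union) (auto simp: disjoint_family_on_def)
  also have "\<dots> = (\<Sum>x\<le>m. pmf A x * measure_pmf.prob B {y. (x, y) \<in> S})"
    by (intro sum.cong refl) (simp add: measure_pmf_prob_product measure_pmf_single)
  finally show ?thesis .
qed

definition binomial_tail :: "nat \<Rightarrow> real \<Rightarrow> real \<Rightarrow> real" where
  "binomial_tail n q r = measure_pmf.prob (binomial_pmf n q) {y. r \<le> real y}"

lemma binomial_tail_bounds: "0 \<le> binomial_tail n q r" "binomial_tail n q r \<le> 1"
  by (simp_all add: binomial_tail_def)

lemma binomial_tail_antimono: "r \<le> r' \<Longrightarrow> binomial_tail n q r' \<le> binomial_tail n q r"
  unfolding binomial_tail_def by (intro measure_pmf.finite_measure_mono) auto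

lemma prob_indep_binoms_eq_sum_tail:
  assumes "0 \<le> p" "p \<le> 1"
  shows "measure_pmf.prob (indep_binoms m p n q) {(x, y). f x \<le> real y}
           = (\<Sum>x\<le>m. pmf (binomial_pmf m p) x * binomial_tail n q (f x))"
  unfolding indep_binoms_def binomial_tail_def using assms
  by (subst prob_pair_pmf_eq_sum[of _ m]) (auto simp: set_pmf_binomial_eq)

lemma binomial_pmf_mgf:
  assumes "0 \<le> p" "p \<le> 1"
  shows "(\<Sum>k\<le>m. pmf (binomial_pmf m p) k * exp (a * real k)) = (1 - p + p * exp a) ^ m"
proof -
  have "(1 - p + p * exp a) ^ m = (\<Sum>k\<le>m. of_nat (m choose k) * (p * exp a) ^ k * (1 - p) ^ (m - k))"
    using binomial_ring[of "p * exp a" "1 - p" m] by (simp add: add.commute)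
  also have "\<dots> = (\<Sum>k\<le>m. pmf (binomial_pmf m p) k * exp (a * real k))"
    using assms by (intro sum.cong refl)
      (simp add: power_mult_distrib exp_of_nat_mult[symmetric] mult.commute mult.left_commute)
  finally show ?thesis by simp
qed

lemma binomial_pmf_mgf_le:
  assumes "0 \<le> p" "p \<le> 1"
  shows "(\<Sum>k\<le>m. pmf (binomial_pmf m p) k * exp (a * real k)) \<le> exp (real m * p * (exp a - 1))"
proof -
  have "1 - p + p * exp a \<le> exp (p * (exp a - 1))"
    using exp_ge_add_one_self[of "p * (exp a - 1)"] by (simp add: algebra_simps)
  moreover have "0 \<le> 1 - p + p * exp a"
    using assms by (intro add_nonneg_nonneg) auto
  ultimately have "(1 - p + p * exp a) ^ m \<le> exp (p * (exp a - 1)) ^ m"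
    by (rule power_mono)
  also have "\<dots> = exp (real m * p * (exp a - 1))"
    by (simp add: exp_of_nat_mult[symmetric] mult.assoc)
  finally show ?thesis using binomial_pmf_mgf[OF assms] by simp
qed

lemma exp_le_one_plus_self_plus_square:
  fixes x :: real
  assumes "\<bar>x\<bar> \<le> 1"
  shows "exp x \<le> 1 + x + x\<^sup>2"
proof (cases "0 \<le> x")
  case True
  then show ?thesis using assms exp_bound[of x] by simp
next
  case False
  define y where "y = - x"
  have y: "0 \<le> y" using False by (simp add: y_def)
  \<comment> \<open>\<open>(1 + y)(1 - y + y\<^sup>2) = 1 + y\<^sup>3 \<ge> 1\<close> and \<open>exp y \<ge> 1 + y\<close>\<close>
  have "1 - y + y\<^sup>2 = (y - 1/2)\<^sup>2 + 3/4"
    by (simp add: power2_eq_square algebra_simps)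
  then have nonneg: "0 \<le> 1 - y + y\<^sup>2"
    by (metis add_nonneg_nonneg zero_le_power2 zero_le_divide_iff zero_le_numeral)
  have "1 \<le> (1 + y) * (1 - y + y\<^sup>2)"
    using y by (simp add: algebra_simps power2_eq_square)
  also have "\<dots> \<le> exp y * (1 - y + y\<^sup>2)"
    by (intro mult_right_mono exp_ge_add_one_self nonneg)
  finally have "exp (- y) \<le> 1 - y + y\<^sup>2"
    by (simp add: exp_minus field_simps)
  then show ?thesis by (simp add: y_def)
qed

lemma binomial_pmf_sum_le_exp:
  assumes "0 \<le> p" "p \<le> 1" "A \<subseteq> {..m}" "\<And>k. k \<in> A \<Longrightarrow> c \<le> a * real k"
  shows "sum (pmf (binomial_pmf m p)) A \<le> exp (real m * p * (exp a - 1) - c)"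
proof -
  let ?F = "pmf (binomial_pmf m p)"
  have "sum ?F A \<le> (\<Sum>k\<in>A. ?F k * exp (a * real k - c))"
    using assms(4) by (intro sum_mono) (simp add: mult_le_cancel_left1)
  also have "\<dots> \<le> (\<Sum>k\<le>m. ?F k * exp (a * real k - c))"
    using assms(3) by (intro sum_mono2) auto
  also have "\<dots> = (\<Sum>k\<le>m. ?F k * exp (a * real k)) * exp (- c)"
    unfolding sum_distrib_right by (intro sum.cong refl) (simp add: mult_exp_exp mult.assoc)
  also have "\<dots> \<le> exp (real m * p * (exp a - 1)) * exp (- c)"
    by (intro mult_right_mono binomial_pmf_mgf_le assms(1,2)) simp
  finally show ?thesis
    by (simp add: mult_exp_exp)
qed

lemma binomial_pmf_sum_far_from_mean:
  assumes "0 \<le> p" "p \<le> 1" "0 < real m * p" "0 \<le> t" "t \<le> 2 * (real m * p)"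
  shows "sum (pmf (binomial_pmf m p)) {k. k \<le> m \<and> t \<le> \<bar>real k - real m * p\<bar>}
           \<le> 2 * exp (- t\<^sup>2 / (4 * (real m * p)))"
proof -
  define \<mu> where "\<mu> = real m * p"
  define a where "a = t / (2 * \<mu>)"
  let ?F = "pmf (binomial_pmf m p)"
  let ?Up = "{k. k \<le> m \<and> \<mu> + t \<le> real k}"
  let ?Lo = "{k. k \<le> m \<and> real k \<le> \<mu> - t}"
  have \<mu>: "0 < \<mu>" using assms(3) by (simp add: \<mu>_def)
  have a: "0 \<le> a" "a \<le> 1"
    using assms(4,5) \<mu> by (auto simp: a_def \<mu>_def field_simps)
  \<comment> \<open>The Chernoff argument with the weight \<open>exp (b * k)\<close>, where \<open>exp b - 1 \<le> b + b\<^sup>2\<close>.\<close>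
  have Chernoff: "sum ?F A \<le> exp (\<mu> * (b + b\<^sup>2) - c)"
    if "\<bar>b\<bar> \<le> 1" "A \<subseteq> {..m}" "\<And>k. k \<in> A \<Longrightarrow> c \<le> b * real k" for A b c
  proof -
    have "\<mu> * (exp b - 1) \<le> \<mu> * (b + b\<^sup>2)"
      using exp_le_one_plus_self_plus_square[OF that(1)] \<mu> by (intro mult_left_mono) auto
    then have "exp (\<mu> * (exp b - 1) - c) \<le> exp (\<mu> * (b + b\<^sup>2) - c)"
      by simp
    then show ?thesis
      using binomial_pmf_sum_le_exp[OF assms(1,2) that(2,3)] unfolding \<mu>_def by linarith
  qed
  have "sum ?F ?Up \<le> exp (\<mu> * (a + a\<^sup>2) - a * (\<mu> + t))"
    using a by (intro Chernoff) (auto intro: mult_left_mono)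
  moreover have "sum ?F ?Lo \<le> exp (\<mu> * (- a + (- a)\<^sup>2) - (- a) * (\<mu> - t))"
    using a by (intro Chernoff) (auto intro: mult_left_mono)
  moreover have "\<mu> * (a + a\<^sup>2) - a * (\<mu> + t) = - t\<^sup>2 / (4 * \<mu>)"
    and "\<mu> * (- a + (- a)\<^sup>2) - (- a) * (\<mu> - t) = - t\<^sup>2 / (4 * \<mu>)"
    using \<mu> by (simp_all add: a_def field_simps power2_eq_square)
  moreover have "sum ?F (?Up \<union> ?Lo) \<le> sum ?F ?Up + sum ?F ?Lo"
    using sum_Un[of ?Up ?Lo ?F] sum_nonneg[of "?Up \<inter> ?Lo" ?F] by simp
  moreover have "{k. k \<le> m \<and> t \<le> \<bar>real k - real m * p\<bar>} = ?Up \<union> ?Lo"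
    by (auto simp: \<mu>_def)
  ultimately show ?thesis
    by (simp add: \<mu>_def)
qed

lemma binomial_pmf_Suc_ratio:
  assumes "0 \<le> p" "p \<le> 1" "Suc i \<le> m"
  shows "pmf (binomial_pmf m p) (Suc i) * real (Suc i) * (1 - p)
           = pmf (binomial_pmf m p) i * real (m - i) * p"
proof -
  have choose: "real (Suc i) * real (m choose Suc i) = real (m - i) * real (m choose i)"
    using binomial_absorption[of i m] binomial_absorb_comp[of m i] by (metis of_nat_mult)
  have "pmf (binomial_pmf m p) (Suc i) * real (Suc i) * (1 - p)
      = (real (Suc i) * real (m choose Suc i)) * p ^ i * ((1 - p) ^ (m - Suc i) * (1 - p)) * p"
    using assms(1,2) by (simp add: algebra_simps)
  also have "\<dots> = (real (m - i) * real (m choose i)) * p ^ i * (1 - p) ^ (m - i) * p"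
    unfolding choose using assms(3) by (simp add: Suc_diff_Suc[symmetric])
  also have "\<dots> = pmf (binomial_pmf m p) i * real (m - i) * p"
    using assms(1,2) by (simp add: algebra_simps)
  finally show ?thesis .
qed

lemma binomial_pmf_Suc_le:
  assumes "0 \<le> p" "p < 1" "Suc i \<le> m" "real (m - i) * p \<le> E * real (Suc i) * (1 - p)"
  shows "pmf (binomial_pmf m p) (Suc i) \<le> E * pmf (binomial_pmf m p) i"
proof -
  let ?F = "pmf (binomial_pmf m p)"
  have "?F (Suc i) * (real (Suc i) * (1 - p)) = ?F i * (real (m - i) * p)"
    using binomial_pmf_Suc_ratio[of p i m] assms by (simp add: mult.assoc)
  also have "\<dots> \<le> ?F i * (E * real (Suc i) * (1 - p))"
    using assms(4) by (intro mult_left_mono) auto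
  finally have "?F (Suc i) * (real (Suc i) * (1 - p)) \<le> (E * ?F i) * (real (Suc i) * (1 - p))"
    by (simp add: algebra_simps)
  then show ?thesis
    using assms(2) by (simp add: mult_le_cancel_right_pos)
qed

lemma le_power_mult_of_steps:
  fixes f :: "nat \<Rightarrow> real"
  assumes "j \<le> k" "0 \<le> E" "\<And>i. j \<le> i \<Longrightarrow> i < k \<Longrightarrow> f (Suc i) \<le> E * f i"
  shows "f k \<le> E ^ (k - j) * f j"
  using assms(1,3)
proof (induction k rule: dec_induct)
  case base
  then show ?case by simp
next
  case (step k)
  have "f (Suc k) \<le> E * f k"
    using step by simp
  also have "\<dots> \<le> E * (E ^ (k - j) * f j)"
    using step assms(2) by (intro mult_left_mono) auto
  also have "\<dots> = E ^ (Suc k - j) * f j"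
    using step(1) by (simp add: Suc_diff_le)
  finally show ?case .
qed

lemma binomial_ratio_le_near_mean:
  assumes p: "0 < p" "p \<le> 2/3" and \<delta>: "0 \<le> \<delta>" "\<delta> \<le> 1/8" "1 \<le> \<delta> * (real m * p)"
    and i: "Suc i \<le> m" "real m * p * (1 - 5 * \<delta>) \<le> real (Suc i)"
  shows "real (m - i) * p \<le> exp (48 * \<delta>) * real (Suc i) * (1 - p)"
proof -
  define \<mu> where "\<mu> = real m * p"
  have \<mu>: "0 < \<mu>" "1 \<le> \<delta> * \<mu>"
    using p i \<delta>(3) by (simp_all add: \<mu>_def)
  have "1 + 12 * \<delta> \<le> (1 - 5 * \<delta>) * (1 + 48 * \<delta>)"
    using \<delta>(1,2) mult_left_mono[OF \<delta>(2,1)] by (simp add: algebra_simps)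
  also have "\<dots> \<le> (1 - 5 * \<delta>) * exp (48 * \<delta>)"
    using \<delta>(2) by (intro mult_left_mono exp_ge_add_one_self) auto
  finally have exp_bound: "1 + 12 * \<delta> \<le> (1 - 5 * \<delta>) * exp (48 * \<delta>)" .
  have "real (m - i) * p = (real m - real (Suc i) + 1) * p"
    using i(1) by (simp add: of_nat_diff)
  also have "\<dots> \<le> (real m - \<mu> * (1 - 5 * \<delta>) + 1) * p"
    using i(2) p by (intro mult_right_mono) (auto simp: \<mu>_def)
  also have "\<dots> = \<mu> * (1 - p) + (5 * \<delta> * \<mu> + 1) * p"
    by (simp add: \<mu>_def algebra_simps)
  also have "\<dots> \<le> \<mu> * (1 - p) + (6 * \<delta> * \<mu>) * (2 * (1 - p))"
    using \<delta> p \<mu> by (intro add_left_mono mult_mono) auto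
  also have "\<dots> = \<mu> * (1 - p) * (1 + 12 * \<delta>)"
    by (simp add: algebra_simps)
  also have "\<dots> \<le> \<mu> * (1 - p) * ((1 - 5 * \<delta>) * exp (48 * \<delta>))"
    using \<mu> p exp_bound by (intro mult_left_mono) auto
  also have "\<dots> = exp (48 * \<delta>) * (\<mu> * (1 - 5 * \<delta>)) * (1 - p)"
    by (simp add: algebra_simps)
  also have "\<dots> \<le> exp (48 * \<delta>) * real (Suc i) * (1 - p)"
    using i(2) p by (intro mult_right_mono mult_left_mono) (auto simp: \<mu>_def)
  finally show ?thesis .
qed

lemma binomial_pmf_le_shift_near_mean:
  assumes p: "0 < p" "p \<le> 2/3" and \<delta>: "0 \<le> \<delta>" "\<delta> \<le> 1/8" "1 \<le> \<delta> * (real m * p)"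
    and k: "L \<le> k" "k \<le> m" "real m * p * (1 - 5 * \<delta>) \<le> real (k - L) + 1"
  shows "pmf (binomial_pmf m p) k \<le> exp (48 * \<delta> * real L) * pmf (binomial_pmf m p) (k - L)"
proof -
  have "pmf (binomial_pmf m p) k \<le> exp (48 * \<delta>) ^ (k - (k - L)) * pmf (binomial_pmf m p) (k - L)"
  proof (rule le_power_mult_of_steps)
    fix i assume "k - L \<le> i" "i < k"
    then show "pmf (binomial_pmf m p) (Suc i) \<le> exp (48 * \<delta>) * pmf (binomial_pmf m p) i"
      using p \<delta> k by (intro binomial_pmf_Suc_le binomial_ratio_le_near_mean) auto
  qed auto
  then show ?thesis
    using k(1) by (simp add: exp_of_nat_mult[symmetric] mult.commute)
qed

lemma sum_shifted_le:
  fixes g :: "nat \<Rightarrow> real"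
  assumes "\<And>x. 0 \<le> g x" "G \<subseteq> {..m}" "\<And>k. k \<in> G \<Longrightarrow> L \<le> k"
  shows "(\<Sum>k\<in>G. g (k - L)) \<le> (\<Sum>x\<le>m. g x)"
proof -
  have "inj_on (\<lambda>k. k - L) G"
    using assms(3) by (intro inj_onI) (metis le_add_diff_inverse2)
  then have "(\<Sum>k\<in>G. g (k - L)) = sum g ((\<lambda>k. k - L) ` G)"
    by (simp add: sum.reindex)
  also have "\<dots> \<le> (\<Sum>x\<le>m. g x)"
    using assms(1,2) by (intro sum_mono2) auto
  finally show ?thesis .
qed

lemma sum_le_sum_subset_plus_rest:
  fixes F h :: "nat \<Rightarrow> real"
  assumes "\<And>k. 0 \<le> F k" "\<And>k. h k \<le> 1" "G \<subseteq> {..m}"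
  shows "(\<Sum>x\<le>m. F x * h x) \<le> (\<Sum>x\<in>G. F x * h x) + sum F ({..m} - G)"
proof -
  have "(\<Sum>x\<in>{..m} - G. F x * h x) \<le> sum F ({..m} - G)"
    using assms(1,2) by (intro sum_mono) (simp add: mult_left_le)
  then show ?thesis
    using sum.subset_diff[OF assms(3), of "\<lambda>x. F x * h x"] by simp
qed

context
  fixes F :: "nat \<Rightarrow> real" and H :: "real \<Rightarrow> real" and G :: "nat set" and E :: real and L m :: nat
  assumes F_nonneg: "\<And>k. 0 \<le> F k" and H_bounds: "\<And>r. 0 \<le> H r" "\<And>r. H r \<le> 1"
    and G: "G \<subseteq> {..m}" and E: "0 \<le> E"
    and shift: "\<And>k. k \<in> G \<Longrightarrow> L \<le> k \<and> F k \<le> E * F (k - L)"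
begin

lemma sum_shift_lower:
  "(\<Sum>x\<le>m. F x * H (real x)) \<le> E * (\<Sum>x\<le>m. F x * H (real x + real L)) + sum F ({..m} - G)"
proof -
  have "(\<Sum>x\<in>G. F x * H (real x)) \<le> (\<Sum>k\<in>G. E * (F (k - L) * H (real (k - L) + real L)))"
    using shift H_bounds(1) by (intro sum_mono) (simp add: mult_right_mono mult.assoc[symmetric])
  also have "\<dots> \<le> E * (\<Sum>x\<le>m. F x * H (real x + real L))"
    unfolding sum_distrib_left[symmetric] using shift F_nonneg H_bounds(1)
    by (intro mult_left_mono sum_shifted_le[OF _ G] E) auto
  finally show ?thesis
    using sum_le_sum_subset_plus_rest[of F "\<lambda>x. H (real x)", OF F_nonneg H_bounds(2) G] by simp
qed

lemma sum_shift_upper: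
  "(\<Sum>x\<le>m. F x * H (real x - real L)) \<le> E * (\<Sum>x\<le>m. F x * H (real x)) + sum F ({..m} - G)"
proof -
  have "(\<Sum>x\<in>G. F x * H (real x - real L)) \<le> (\<Sum>k\<in>G. E * (F (k - L) * H (real (k - L))))"
    using shift H_bounds(1) by (intro sum_mono) (simp add: mult_right_mono mult.assoc[symmetric])
  also have "\<dots> \<le> E * (\<Sum>x\<le>m. F x * H (real x))"
    unfolding sum_distrib_left[symmetric] using shift F_nonneg H_bounds(1)
    by (intro mult_left_mono sum_shifted_le[OF _ G] E) auto
  finally show ?thesis
    using sum_le_sum_subset_plus_rest[of F "\<lambda>x. H (real x - real L)", OF F_nonneg H_bounds(2) G]
    by simp
qed

end

locale binomial_window =
  fixes m :: nat and p \<delta> :: real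
  assumes m: "2 \<le> m" and p: "0 \<le> p" "p \<le> 2/3" and mean: "64 * ln (real m) \<le> real m * p"
    and \<delta>_def: "\<delta> = sqrt (ln (real m) / (real m * p))"
begin

lemma ln_ge: "1/8 \<le> ln (real m)"
proof -
  have "exp (1/8 :: real) \<le> 1 + 1/8 + (1/8)\<^sup>2"
    by (rule exp_bound) auto
  also have "\<dots> \<le> real m"
    using m by (simp add: power2_eq_square)
  finally show ?thesis
    using m ln_ge_iff[of "real m" "1/8"] by simp
qed

lemma mean_pos: "0 < real m * p"
  using mean ln_ge by linarith

lemma p_pos: "0 < p"
  using mean_pos p by (simp add: zero_less_mult_iff)

lemma \<delta>_nonneg: "0 \<le> \<delta>"
  using ln_ge mean_pos by (simp add: \<delta>_def)

lemma \<delta>_le: "\<delta> \<le> 1/8"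
proof -
  have "ln (real m) / (real m * p) \<le> (1/8)\<^sup>2"
    using mean mean_pos by (simp add: divide_le_eq power2_eq_square)
  then have "\<delta> \<le> sqrt ((1/8)\<^sup>2)"
    unfolding \<delta>_def by (rule real_sqrt_le_mono)
  then show ?thesis
    by simp
qed

lemma \<delta>_mean_eq: "\<delta> * (real m * p) = sqrt (real m * p * ln (real m))"
proof (rule real_sqrt_unique[symmetric])
  have "\<delta>\<^sup>2 = ln (real m) / (real m * p)"
    unfolding \<delta>_def using ln_ge mean_pos by (intro real_sqrt_pow2) simp
  then have "(\<delta> * (real m * p))\<^sup>2 = ln (real m) / (real m * p) * (real m * p)\<^sup>2"
    by (simp add: power_mult_distrib)
  also have "\<dots> = real m * p * ln (real m)"
    using mean_pos by (simp add: power2_eq_square)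
  finally show "(\<delta> * (real m * p))\<^sup>2 = real m * p * ln (real m)" .
  show "0 \<le> \<delta> * (real m * p)"
    using \<delta>_nonneg mean_pos by simp
qed

lemma \<delta>_mean_ge: "1 \<le> \<delta> * (real m * p)"
proof -
  have "1 \<le> 64 * ln (real m) * ln (real m)"
    using ln_ge mult_mono[OF ln_ge ln_ge] by simp
  also have "\<dots> \<le> real m * p * ln (real m)"
    using mean ln_ge by (intro mult_right_mono) auto
  finally show ?thesis
    unfolding \<delta>_mean_eq by simp
qed

lemma prob_eq_sum_tail:
  "measure_pmf.prob (indep_binoms m p n q) {(x, y). f x \<le> real y}
     = (\<Sum>x\<le>m. pmf (binomial_pmf m p) x * binomial_tail n q (f x))"
  using p by (intro prob_indep_binoms_eq_sum_tail) auto

definition window :: "nat set" where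
  "window = {k. k \<le> m \<and> \<bar>real k - real m * p\<bar> < 3 * (\<delta> * (real m * p))}"

lemma window_subset: "window \<subseteq> {..m}"
  by (auto simp: window_def)

lemma window_complement_mass: "sum (pmf (binomial_pmf m p)) ({..m} - window) \<le> 2 / (real m)\<^sup>2"
proof -
  let ?t = "3 * (\<delta> * (real m * p))"
  have "(\<delta> * (real m * p))\<^sup>2 = real m * p * ln (real m)"
    unfolding \<delta>_mean_eq using mean_pos ln_ge by simp
  then have "?t\<^sup>2 = 9 * (real m * p * ln (real m))"
    by (simp add: power2_eq_square algebra_simps)
  then have "?t\<^sup>2 / (4 * (real m * p)) = 9/4 * ln (real m)"
    using p_pos m by (simp add: field_simps)
  then have exponent: "- ?t\<^sup>2 / (4 * (real m * p)) \<le> - (2 * ln (real m))"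
    using minus_divide_left[of "?t\<^sup>2" "4 * (real m * p)"] ln_ge by linarith
  have "exp (2 * ln (real m)) = exp (ln (real m)) ^ 2"
    by (metis exp_of_nat_mult of_nat_numeral)
  then have exp_ln: "exp (- (2 * ln (real m))) = 1 / (real m)\<^sup>2"
    using m by (simp add: exp_minus inverse_eq_divide)
  have "?t \<le> 2 * (real m * p)"
    using mult_right_mono[OF \<delta>_le, of "real m * p"] mean_pos by simp
  moreover have "{..m} - window = {k. k \<le> m \<and> ?t \<le> \<bar>real k - real m * p\<bar>}"
    by (auto simp: window_def)
  ultimately have "sum (pmf (binomial_pmf m p)) ({..m} - window) \<le> 2 * exp (- ?t\<^sup>2 / (4 * (real m * p)))"
    using p \<delta>_nonneg mean_pos binomial_pmf_sum_far_from_mean[of p m ?t] by simp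
  also have "\<dots> \<le> 2 * exp (- (2 * ln (real m)))"
    using exponent by simp
  finally show ?thesis
    unfolding exp_ln by simp
qed

lemma window_shift:
  assumes k: "k \<in> window" and L: "real L \<le> 2 * (\<delta> * (real m * p))"
  shows "L \<le> k \<and> pmf (binomial_pmf m p) k \<le> exp (48 * \<delta> * real L) * pmf (binomial_pmf m p) (k - L)"
proof
  have "\<delta> * (real m * p) \<le> 1/8 * (real m * p)"
    using \<delta>_le mean_pos by (intro mult_right_mono) auto
  then show Lk: "L \<le> k"
    using k L by (simp add: window_def) linarith
  have "real m * p - 3 * (\<delta> * (real m * p)) < real k"
    using k by (auto simp: window_def abs_less_iff)
  moreover have "real m * p * (1 - 5 * \<delta>) = real m * p - 5 * (\<delta> * (real m * p))"
    by (simp add: algebra_simps)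
  ultimately have "real m * p * (1 - 5 * \<delta>) \<le> real (k - L) + 1"
    using L Lk by (simp add: of_nat_diff)
  moreover have "k \<le> m"
    using k window_subset by auto
  ultimately show "pmf (binomial_pmf m p) k \<le> exp (48 * \<delta> * real L) * pmf (binomial_pmf m p) (k - L)"
    using binomial_pmf_le_shift_near_mean[OF p_pos p(2) \<delta>_nonneg \<delta>_le \<delta>_mean_ge Lk] by blast
qed

context
  fixes n :: nat and q l :: real
  assumes l: "1 \<le> l" "l \<le> sqrt (real m * p * ln (real m))"
begin

lemma shift_le_twice_radius: "real L \<le> l + 1 \<Longrightarrow> real L \<le> 2 * (\<delta> * (real m * p))"
  using l \<delta>_mean_eq \<delta>_mean_ge by linarith

lemma shift_exponent_le: "real L \<le> l + 1 \<Longrightarrow> 48 * \<delta> * real L \<le> 100 * l * \<delta>"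
  using l(1) \<delta>_nonneg mult_right_mono[of "48 * real L" "100 * l" \<delta>] by (simp add: ac_simps)

lemma indep_binoms_shift_lower:
  "measure_pmf.prob (indep_binoms m p n q) {(x, y). real y \<ge> real x} * exp (- 100 * l * \<delta>)
     - 2 / (real m)\<^sup>2 \<le> measure_pmf.prob (indep_binoms m p n q) {(x, y). real y \<ge> real x + l}"
  (is "?P0 * _ - _ \<le> ?Pl")
proof -
  define L where "L = nat \<lceil>l\<rceil>"
  have L: "l \<le> real L" "real L \<le> l + 1"
    using l(1) by (auto simp: L_def)
  let ?E = "exp (48 * \<delta> * real L)"
  let ?PL = "\<Sum>x\<le>m. pmf (binomial_pmf m p) x * binomial_tail n q (real x + real L)"
  have "?P0 \<le> ?E * ?PL + sum (pmf (binomial_pmf m p)) ({..m} - window)"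
    using sum_shift_lower[OF pmf_nonneg binomial_tail_bounds window_subset _ window_shift]
      shift_le_twice_radius[OF L(2)] prob_eq_sum_tail[where f = real] by simp
  then have P0_le: "?P0 \<le> ?E * ?PL + 2 / (real m)\<^sup>2"
    using window_complement_mass by linarith
  have "?P0 * exp (- 100 * l * \<delta>) \<le> ?P0 * exp (- (48 * \<delta> * real L))"
    using shift_exponent_le[OF L(2)] by (intro mult_left_mono) auto
  also have "\<dots> \<le> (?E * ?PL + 2 / (real m)\<^sup>2) * exp (- (48 * \<delta> * real L))"
    using P0_le by (intro mult_right_mono) auto
  also have "\<dots> = ?PL + 2 / (real m)\<^sup>2 * exp (- (48 * \<delta> * real L))"
    by (simp add: distrib_right exp_minus)
  also have "\<dots> \<le> ?PL + 2 / (real m)\<^sup>2"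
    using \<delta>_nonneg by (intro add_left_mono mult_left_le) auto
  also have "?PL \<le> ?Pl"
    unfolding prob_eq_sum_tail[where f = "\<lambda>x. real x + l"] using L(1)
    by (intro sum_mono mult_left_mono binomial_tail_antimono) auto
  finally show ?thesis
    by simp
qed

lemma indep_binoms_shift_upper:
  "measure_pmf.prob (indep_binoms m p n q) {(x, y). real y \<ge> real x - l}
     \<le> measure_pmf.prob (indep_binoms m p n q) {(x, y). real y \<ge> real x} * exp (100 * l * \<delta>)
       + 2 / (real m)\<^sup>2"
  (is "?Pl \<le> ?P0 * _ + _")
proof -
  define L where "L = nat \<lfloor>l\<rfloor>"
  have L: "real L \<le> l + 1"
    using l(1) by (simp add: L_def) linarith
  have "real x - l \<le> real y \<longleftrightarrow> real x - real L \<le> real y" for x y :: nat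
  proof -
    have "real x - l \<le> real y \<longleftrightarrow> of_int (int x - int y) \<le> l"
      by auto
    also have "\<dots> \<longleftrightarrow> int x - int y \<le> \<lfloor>l\<rfloor>"
      by (rule le_floor_iff[symmetric])
    also have "\<dots> \<longleftrightarrow> real x - real L \<le> real y"
      using l(1) unfolding L_def by linarith
    finally show ?thesis .
  qed
  then have "?Pl = (\<Sum>x\<le>m. pmf (binomial_pmf m p) x * binomial_tail n q (real x - real L))"
    using prob_eq_sum_tail[where f = "\<lambda>x. real x - real L"] by simp
  also have "\<dots> \<le> exp (48 * \<delta> * real L) * ?P0 + sum (pmf (binomial_pmf m p)) ({..m} - window)"
    using sum_shift_upper[OF pmf_nonneg binomial_tail_bounds window_subset _ window_shift]
      shift_le_twice_radius[OF L] prob_eq_sum_tail[where f = real] by simp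
  also have "\<dots> \<le> ?P0 * exp (100 * l * \<delta>) + 2 / (real m)\<^sup>2"
    using window_complement_mass shift_exponent_le[OF L]
    by (intro add_mono) (simp_all add: mult.commute mult_left_mono)
  finally show ?thesis .
qed

end

end

theorem proposition3p1:
  "\<exists>C::real. C > 0 \<and>
     (\<forall>(m::nat) (n::nat) (p::real) (q::real) (l::real).
        m \<ge> 2 \<longrightarrow> 0 \<le> p \<longrightarrow> p \<le> 1 \<longrightarrow> 0 \<le> q \<longrightarrow> q \<le> 1 \<longrightarrow>
        real m * p \<ge> 64 * ln (real m) \<longrightarrow> p \<le> 2/3 \<longrightarrow>
        1 \<le> l \<longrightarrow> l \<le> sqrt (real m * p * ln (real m)) \<longrightarrow>
        (let M = indep_binoms m p n q;
             P0 = measure_pmf.prob M {(x, y). real y \<ge> real x}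
         in measure_pmf.prob M {(x, y). real y \<ge> real x + l}
              \<ge> P0 * exp (- C * l * sqrt (ln (real m) / (real m * p))) - 2 / (real m)\<^sup>2
          \<and> measure_pmf.prob M {(x, y). real y \<ge> real x - l}
              \<le> P0 * exp (C * l * sqrt (ln (real m) / (real m * p))) + 2 / (real m)\<^sup>2))"
proof (intro exI[of _ 100] conjI allI impI, goal_cases)
  case (2 m n p q l)
  then interpret binomial_window m p "sqrt (ln (real m) / (real m * p))"
    by unfold_locales auto
  show ?case
    using 2 indep_binoms_shift_lower indep_binoms_shift_upper by (simp add: Let_def)
qed simp

end
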